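(* Let $\Sigma$ be a finite set with $n$ elements and $\mathcal{R}$ a reflexive symmetric relation on $\Sigma$, and let $\mathcal{G}$ be the simple graph on $\Sigma$ whose edges are the pairs $\{a,b\}$, $a\neq b$, with $(a,b)\in\mathcal{R}$. Then $\mathcal{G}$ is chordal if and only if there exists an enumeration $a_1,\dots,a_n$ of $\Sigma$ such that for all $1\leqslant k<\ell\leqslant n$, either $a_k\in\mathscr{L}(a_\ell)$, or $C_k\cap\mathscr{L}(a_\ell)=\emptyset$, where $C_k$ is the connected component of $a_k$ in the subgraph of $\mathcal{G}$ induced by $\{a_1,\dots,a_k\}$.
   Context: $\mathscr{L}(a)=\{b\in\Sigma:(a,b)\in\mathcal{R}\}$ (so $a\in\mathscr{L}(a)$). A graph is chordal if it has no induced cycle of length $4$ or more. (In the paper, the stated condition on the enumeration is exactly the condition under which the rejection sampling procedures Algorithms 2 and 4 never reject.) *)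

theory Defs
  imports Main
begin

definition nbhd :: "'a set \<Rightarrow> ('a \<times> 'a) set \<Rightarrow> 'a \<Rightarrow> 'a set" where
  "nbhd \<Sigma> R a = {b \<in> \<Sigma>. (a, b) \<in> R}"

definition adj :: "('a \<times> 'a) set \<Rightarrow> 'a \<Rightarrow> 'a \<Rightarrow> bool" where
  "adj R a b \<longleftrightarrow> a \<noteq> b \<and> (a, b) \<in> R"

definition induced_cycle :: "'a set \<Rightarrow> ('a \<times> 'a) set \<Rightarrow> 'a list \<Rightarrow> bool" where
  "induced_cycle \<Sigma> R vs \<longleftrightarrow>
     length vs \<ge> 4 \<and> distinct vs \<and> set vs \<subseteq> \<Sigma> \<and>
     (\<forall>i < length vs. \<forall>j < length vs.
        adj R (vs ! i) (vs ! j) \<longleftrightarrow>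
          (j = (i + 1) mod length vs \<or> i = (j + 1) mod length vs))"

definition chordal :: "'a set \<Rightarrow> ('a \<times> 'a) set \<Rightarrow> bool" where
  "chordal \<Sigma> R \<longleftrightarrow> \<not> (\<exists>vs. induced_cycle \<Sigma> R vs)"

definition component :: "('a \<times> 'a) set \<Rightarrow> 'a set \<Rightarrow> 'a \<Rightarrow> 'a set" where
  "component R S x =
     (if x \<in> S then {y. (x, y) \<in> {(u, v). u \<in> S \<and> v \<in> S \<and> adj R u v}\<^sup>*} else {})"

end

theory Submission
  imports Defs
begin

text \<open>
  If the graph is chordal, Dirac's lemma gives a simplicial vertex, and peeling off simplicial
  vertices one at a time yields the enumeration: when a simplicial vertex is added to a prefix
  it only merges components through its pairwise adjacent neighbours, so the admissibility of
  the remaining enumeration survives.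

  Conversely, take an induced cycle of length at least four, its vertex \<open>m\<close> enumerated last
  and its two cycle neighbours \<open>x\<close> and \<open>y\<close>, where \<open>x\<close> comes before \<open>y\<close>. The cycle without \<open>m\<close> and
  \<open>y\<close> is a connected set \<open>A\<close> containing \<open>x\<close>, enumerated before \<open>m\<close>. Admissibility applied
  to \<open>m\<close>, which sees \<open>x\<close>, forces the last vertex of \<open>A\<close> to be a neighbour of \<open>m\<close>, i.e.
  to be \<open>x\<close>; applied to \<open>y\<close>, which sees \<open>A\<close>, it then forces the chord \<open>xy\<close>.
\<close>

definition induced_edges :: "('a \<times> 'a) set \<Rightarrow> 'a set \<Rightarrow> ('a \<times> 'a) set" where
  "induced_edges R S = {(u, v). u \<in> S \<and> v \<in> S \<and> adj R u v}"

definition induced_connected :: "('a \<times> 'a) set \<Rightarrow> 'a set \<Rightarrow> bool" where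
  "induced_connected R S \<longleftrightarrow> (\<forall>a\<in>S. \<forall>b\<in>S. (a, b) \<in> (induced_edges R S)\<^sup>*)"

lemma adj_sym: "sym R \<Longrightarrow> adj R a b \<longleftrightarrow> adj R b a"
  by (auto simp: adj_def dest: symD)

lemma adj_irrefl [simp]: "\<not> adj R a a"
  by (simp add: adj_def)

lemma component_eq: "component R S x = (if x \<in> S then {y. (x, y) \<in> (induced_edges R S)\<^sup>*} else {})"
  by (simp add: component_def induced_edges_def)

lemma induced_edges_rtrancl_sym:
  assumes "sym R" "(a, b) \<in> (induced_edges R S)\<^sup>*"
  shows "(b, a) \<in> (induced_edges R S)\<^sup>*"
proof -
  have "(induced_edges R S)\<inverse> = induced_edges R S"
    using adj_sym[OF assms(1)] by (auto simp: induced_edges_def)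
  with rtrancl_converseI[OF assms(2)] show ?thesis by simp
qed

lemma induced_edges_rtrancl_mono:
  "S \<subseteq> T \<Longrightarrow> (a, b) \<in> (induced_edges R S)\<^sup>* \<Longrightarrow> (a, b) \<in> (induced_edges R T)\<^sup>*"
  by (rule rtrancl_mono[THEN subsetD]) (auto simp: induced_edges_def)

lemma induced_edges_rtrancl_closed:
  "(a, b) \<in> (induced_edges R S)\<^sup>* \<Longrightarrow> a \<in> S \<Longrightarrow> b \<in> S"
  by (induction rule: rtrancl_induct) (auto simp: induced_edges_def)

lemma induced_connectedI:
  assumes "sym R" "c \<in> S" "\<And>x. x \<in> S \<Longrightarrow> (c, x) \<in> (induced_edges R S)\<^sup>*"
  shows "induced_connected R S"
  unfolding induced_connected_def
  using assms induced_edges_rtrancl_sym rtrancl_trans by metis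

lemma self_in_component: "x \<in> S \<Longrightarrow> x \<in> component R S x"
  by (simp add: component_eq)

lemma component_subset: "component R S x \<subseteq> S"
proof
  fix y assume "y \<in> component R S x"
  then have "x \<in> S" "(x, y) \<in> (induced_edges R S)\<^sup>*"
    by (auto simp: component_eq split: if_splits)
  then show "y \<in> S" using induced_edges_rtrancl_closed by metis
qed

lemma component_adj_closed:
  "d \<in> component R S x \<Longrightarrow> y \<in> S \<Longrightarrow> adj R d y \<Longrightarrow> y \<in> component R S x"
proof -
  assume d: "d \<in> component R S x" and y: "y \<in> S" "adj R d y"
  then have x: "x \<in> S" and xd: "(x, d) \<in> (induced_edges R S)\<^sup>*"
    by (auto simp: component_eq split: if_splits)
  then have "(d, y) \<in> induced_edges R S"
    using y induced_edges_rtrancl_closed by (auto simp: induced_edges_def)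
  with x xd show ?thesis by (simp add: component_eq rtrancl_into_rtrancl)
qed

lemma induced_connected_component:
  assumes "sym R"
  shows "induced_connected R (component R S x)"
proof (cases "x \<in> S")
  case True
  have "(x, y) \<in> (induced_edges R (component R S x))\<^sup>*" if "y \<in> component R S x" for y
  proof -
    from that True have "(x, y) \<in> (induced_edges R S)\<^sup>*" by (simp add: component_eq)
    then show ?thesis
    proof (induction rule: rtrancl_induct)
      case (step y z)
      then have "(y, z) \<in> induced_edges R (component R S x)"
        using True by (auto simp: component_eq induced_edges_def intro: rtrancl_into_rtrancl)
      with step.IH show ?case by (rule rtrancl_into_rtrancl)
    qed simp
  qed
  with True show ?thesis by (intro induced_connectedI[OF assms]) (auto intro: self_in_component)
qed (simp add: component_eq induced_connected_def)

lemma induced_connected_subset_component: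
  assumes "induced_connected R Q" "Q \<subseteq> S" "x \<in> Q"
  shows "Q \<subseteq> component R S x"
proof
  fix q assume "q \<in> Q"
  with assms(1,3) have "(x, q) \<in> (induced_edges R Q)\<^sup>*"
    by (simp add: induced_connected_def)
  with assms(2) have "(x, q) \<in> (induced_edges R S)\<^sup>*"
    by (rule induced_edges_rtrancl_mono)
  with assms(2,3) show "q \<in> component R S x" by (auto simp: component_eq)
qed

fun walk :: "('a \<times> 'a) set \<Rightarrow> 'a list \<Rightarrow> bool" where
  "walk R [] = True"
| "walk R [x] = True"
| "walk R (x # y # r) \<longleftrightarrow> adj R x y \<and> walk R (y # r)"

lemma walk_append:
  "walk R (xs @ ys) \<longleftrightarrow> walk R xs \<and> walk R ys \<and> (xs \<noteq> [] \<longrightarrow> ys \<noteq> [] \<longrightarrow> adj R (last xs) (hd ys))"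
proof (induction R xs rule: walk.induct)
  case (2 R x) then show ?case by (cases ys) auto
qed auto

lemma walk_nth: "walk R p \<Longrightarrow> Suc i < length p \<Longrightarrow> adj R (p ! i) (p ! Suc i)"
proof (induction R p arbitrary: i rule: walk.induct)
  case (3 R x y r) then show ?case by (cases i) auto
qed auto

lemma walk_take: "walk R p \<Longrightarrow> walk R (take n p)"
  using walk_append[of R "take n p" "drop n p"] by simp

lemma walk_drop: "walk R p \<Longrightarrow> walk R (drop n p)"
  using walk_append[of R "take n p" "drop n p"] by simp

lemma walk_shortcut:
  assumes "walk R p" "i < j" "j < length p" "adj R (p ! i) (p ! j)"
  shows "walk R (take (Suc i) p @ drop j p)"
proof -
  have "last (take (Suc i) p) = p ! i" "hd (drop j p) = p ! j"
    using assms(2,3) by (simp_all add: take_Suc_conv_app_nth hd_drop_conv_nth)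
  then show ?thesis
    using assms walk_take[OF assms(1)] walk_drop[OF assms(1)] by (simp add: walk_append)
qed

lemma walk_remove_loop:
  assumes "walk R p" "i < j" "j < length p" "p ! i = p ! j"
  shows "walk R (take i p @ drop j p)"
proof -
  have "take i p @ drop j p = take (Suc i) p @ drop (Suc j) p"
    using assms by (simp add: take_Suc_conv_app_nth Cons_nth_drop_Suc)
  moreover have "walk R (take (Suc i) p @ drop (Suc j) p)"
  proof (cases "Suc j < length p")
    case True
    with assms walk_nth[of R p j] show ?thesis by (intro walk_shortcut) auto
  next
    case False
    with assms(1) show ?thesis by (simp add: walk_take)
  qed
  ultimately show ?thesis by simp
qed

definition walk_between :: "('a \<times> 'a) set \<Rightarrow> 'a set \<Rightarrow> 'a \<Rightarrow> 'a \<Rightarrow> 'a list \<Rightarrow> bool" where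
  "walk_between R X a b p \<longleftrightarrow> p \<noteq> [] \<and> hd p = a \<and> last p = b \<and> set p \<subseteq> X \<and> walk R p"

definition induced_path :: "('a \<times> 'a) set \<Rightarrow> 'a list \<Rightarrow> bool" where
  "induced_path R p \<longleftrightarrow> distinct p \<and>
     (\<forall>i < length p. \<forall>j < length p. adj R (p ! i) (p ! j) \<longleftrightarrow> j = Suc i \<or> i = Suc j)"

lemma walk_between_of_rtrancl:
  assumes "(a, b) \<in> (induced_edges R X)\<^sup>*" "a \<in> X"
  shows "\<exists>p. walk_between R X a b p"
  using assms(1)
proof (induction rule: rtrancl_induct)
  case base
  with assms(2) show ?case by (intro exI[of _ "[a]"]) (simp add: walk_between_def)
next
  case (step y z)
  then obtain p where "walk_between R X a y p" by blast
  with step(2) have "walk_between R X a z (p @ [z])"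
    by (auto simp: walk_between_def walk_append induced_edges_def)
  then show ?case by blast
qed

lemma walk_between_splice:
  assumes "walk_between R X a b p" "walk R (take i p @ drop j p)" "j < length p"
    and "i = 0 \<Longrightarrow> p ! j = a"
  shows "walk_between R X a b (take i p @ drop j p)"
proof -
  have "hd (take i p @ drop j p) = a"
    using assms by (cases i) (auto simp: walk_between_def hd_drop_conv_nth hd_conv_nth nth_append)
  moreover have "set (take i p @ drop j p) \<subseteq> set p"
    using set_take_subset set_drop_subset by fastforce
  ultimately show ?thesis
    using assms by (auto simp: walk_between_def)
qed

lemma shortest_walk_induced_path:
  assumes "sym R" and p: "walk_between R X a b p"
    and shortest: "\<And>q. walk_between R X a b q \<Longrightarrow> length p \<le> length q"
  shows "induced_path R p"
proof -
  have walk: "walk R p" and hd: "p ! 0 = a"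
    using p by (auto simp: walk_between_def hd_conv_nth)
  have distinct_entries: "p ! i \<noteq> p ! j" if "i < j" "j < length p" for i j
  proof
    assume "p ! i = p ! j"
    with that walk hd have "walk_between R X a b (take i p @ drop j p)"
      by (intro walk_between_splice[OF p] walk_remove_loop) auto
    with shortest that show False by fastforce
  qed
  have no_chord: "\<not> adj R (p ! i) (p ! j)" if "Suc i < j" "j < length p" for i j
  proof
    assume "adj R (p ! i) (p ! j)"
    with that walk have "walk_between R X a b (take (Suc i) p @ drop j p)"
      by (intro walk_between_splice[OF p] walk_shortcut) auto
    with shortest that show False by fastforce
  qed
  have "distinct p"
    using distinct_entries by (metis distinct_conv_nth linorder_neqE_nat)
  moreover have "adj R (p ! i) (p ! j) \<longleftrightarrow> j = Suc i \<or> i = Suc j"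
    if "i < length p" "j < length p" for i j
    using that no_chord walk_nth[OF walk] adj_sym[OF assms(1)] adj_irrefl
    by (metis Suc_lessI linorder_neqE_nat)
  ultimately show ?thesis by (simp add: induced_path_def)
qed

lemma induced_cycle_Cons:
  assumes "sym R" "induced_path R p" "length p \<ge> 3" "v \<notin> set p" "set (v # p) \<subseteq> \<Sigma>"
    and v_adj: "\<And>i. i < length p \<Longrightarrow> adj R v (p ! i) \<longleftrightarrow> i = 0 \<or> i = length p - 1"
  shows "induced_cycle \<Sigma> R (v # p)"
  unfolding induced_cycle_def
proof (intro conjI allI impI)
  show "4 \<le> length (v # p)" "distinct (v # p)" "set (v # p) \<subseteq> \<Sigma>"
    using assms by (auto simp: induced_path_def)
  define n where "n = length p"
  have succ: "(i + 1) mod length (v # p) = (if i = n then 0 else Suc i)" if "i \<le> n" for i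
    using that by (cases "i = n") (auto simp: n_def)
  have path_adj: "\<And>a b. a < n \<Longrightarrow> b < n \<Longrightarrow> adj R (p ! a) (p ! b) \<longleftrightarrow> b = Suc a \<or> a = Suc b"
    using assms(2) by (simp add: induced_path_def n_def)
  fix i j assume "i < length (v # p)" "j < length (v # p)"
  then have i: "i \<le> n" and j: "j \<le> n" by (simp_all add: n_def)
  have "adj R ((v # p) ! i) ((v # p) ! j) \<longleftrightarrow>
      j = (if i = n then 0 else Suc i) \<or> i = (if j = n then 0 else Suc j)"
  proof (cases i; cases j)
    fix a b assume "i = Suc a" "j = Suc b"
    with i j path_adj[of a b] show ?thesis by auto
  next
    fix b assume "i = 0" "j = Suc b"
    with j v_adj[of b] assms(3) show ?thesis by (auto simp: n_def)
  next
    fix a assume "i = Suc a" "j = 0"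
    with i v_adj[of a] assms(3) adj_sym[OF assms(1)] show ?thesis by (auto simp: n_def)
  qed (use assms(3) in \<open>auto simp: n_def\<close>)
  with succ[OF i] succ[OF j] show "adj R ((v # p) ! i) ((v # p) ! j) \<longleftrightarrow>
      j = (i + 1) mod length (v # p) \<or> i = (j + 1) mod length (v # p)"
    by simp
qed

section \<open>Simplicial vertices of chordal graphs\<close>

lemma chordal_subset: "chordal \<Sigma> R \<Longrightarrow> \<Sigma>' \<subseteq> \<Sigma> \<Longrightarrow> chordal \<Sigma>' R"
  unfolding chordal_def induced_cycle_def by blast

lemma chordal_common_neighbours_adjacent:
  assumes "chordal \<Sigma> R" "sym R" "v \<in> \<Sigma>" "D \<subseteq> \<Sigma>" "induced_connected R D"
    and D_far: "\<forall>x\<in>D. x \<noteq> v \<and> \<not> adj R v x"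
    and t: "t1 \<in> \<Sigma>" "t2 \<in> \<Sigma>" "adj R v t1" "adj R v t2" "t1 \<noteq> t2"
    and d: "d1 \<in> D" "d2 \<in> D" "adj R t1 d1" "adj R t2 d2"
  shows "adj R t1 t2"
proof (rule ccontr)
  \<comment> \<open>Otherwise a shortest \<open>t1\<close>--\<open>t2\<close> path through \<open>D\<close>, closed up by \<open>v\<close>, is an induced cycle.\<close>
  assume nonadj: "\<not> adj R t1 t2"
  define X where "X = insert t1 (insert t2 D)"
  obtain q where q: "walk_between R D d1 d2 q"
    using assms(5) d(1,2) walk_between_of_rtrancl unfolding induced_connected_def by metis
  then have "walk_between R X t1 t2 (t1 # q @ [t2])"
    using d adj_sym[OF assms(2)] walk_append[of R "[t1]" "q @ [t2]"]
    by (auto simp: walk_between_def walk_append X_def)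
  then obtain p where p: "walk_between R X t1 t2 p"
    and shortest: "\<And>q. walk_between R X t1 t2 q \<Longrightarrow> length p \<le> length q"
    using ex_has_least_nat[of "walk_between R X t1 t2" _ length] by metis
  define n where "n = length p"
  have path: "induced_path R p"
    using shortest_walk_induced_path[OF assms(2) p shortest] .
  have ends: "p ! 0 = t1" "p ! (n - 1) = t2" and "0 < n" and "set p \<subseteq> X"
    using p by (auto simp: walk_between_def n_def hd_conv_nth last_conv_nth)
  have "n \<ge> 3"
  proof -
    have "n \<noteq> 1" using ends t(5) by auto
    moreover have "n \<noteq> 2" using ends path nonadj by (auto simp: induced_path_def n_def)
    ultimately show ?thesis using \<open>0 < n\<close> by linarith
  qed
  have inner_in_D: "p ! i \<in> D" if "0 < i" "i < n - 1" for i
  proof -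
    have "i < n" using that by linarith
    moreover have "distinct p" using path by (simp add: induced_path_def)
    ultimately have "p ! i \<noteq> p ! 0" "p ! i \<noteq> p ! (n - 1)" "p ! i \<in> X"
      using that \<open>set p \<subseteq> X\<close> nth_eq_iff_index_eq nth_mem by (fastforce simp: n_def)+
    then show ?thesis using ends by (simp add: X_def)
  qed
  have "v \<notin> set p"
    using \<open>set p \<subseteq> X\<close> D_far t(3,4) by (auto simp: X_def)
  moreover have "adj R v (p ! i) \<longleftrightarrow> i = 0 \<or> i = n - 1" if "i < n" for i
    using that ends t(3,4) inner_in_D D_far by (metis gr0I less_SucE Suc_pred' \<open>0 < n\<close>)
  ultimately have "induced_cycle \<Sigma> R (v # p)"
    using assms(2-4) path \<open>n \<ge> 3\<close> \<open>set p \<subseteq> X\<close> t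
    by (intro induced_cycle_Cons) (auto simp: n_def X_def)
  with assms(1) show False by (auto simp: chordal_def)
qed

definition simplicial :: "'a set \<Rightarrow> ('a \<times> 'a) set \<Rightarrow> 'a \<Rightarrow> bool" where
  "simplicial \<Sigma> R s \<longleftrightarrow> s \<in> \<Sigma> \<and> (\<forall>x\<in>\<Sigma>. \<forall>y\<in>\<Sigma>. adj R s x \<longrightarrow> adj R s y \<longrightarrow> x \<noteq> y \<longrightarrow> adj R x y)"

lemma ex_simplicial_if_nonadjacent_pairs:
  assumes "\<Sigma> \<noteq> {}"
    and "\<And>v u. v \<in> \<Sigma> \<Longrightarrow> u \<in> \<Sigma> \<Longrightarrow> u \<noteq> v \<Longrightarrow> \<not> adj R v u \<Longrightarrow> \<exists>x. simplicial \<Sigma> R x"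
  shows "\<exists>x. simplicial \<Sigma> R x"
proof (cases "\<exists>v\<in>\<Sigma>. \<exists>u\<in>\<Sigma>. u \<noteq> v \<and> \<not> adj R v u")
  case False
  with assms(1) obtain x where "x \<in> \<Sigma>" by blast
  with False have "simplicial \<Sigma> R x" by (auto simp: simplicial_def)
  then show ?thesis ..
qed (use assms(2) in blast)

lemma simplicial_superset:
  assumes "simplicial H R x" "H \<subseteq> \<Sigma>" "\<And>y. y \<in> \<Sigma> \<Longrightarrow> adj R x y \<Longrightarrow> y \<in> H"
  shows "simplicial \<Sigma> R x"
  using assms by (auto simp: simplicial_def)

lemma simplicial_Un_universal:
  assumes "sym R" "simplicial D R x" "\<And>t h. t \<in> T \<Longrightarrow> h \<in> D \<union> T \<Longrightarrow> h \<noteq> t \<Longrightarrow> adj R t h"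
  shows "simplicial (D \<union> T) R x"
  using assms adj_sym[OF assms(1)] unfolding simplicial_def by (metis UnCI UnE)

lemma simplicial_of_simplicial_in_far_component:
  assumes "sym R" "W = {x \<in> A. x \<noteq> v \<and> \<not> adj R v x}" "D = component R W u"
    and "T = {t \<in> A. adj R v t \<and> (\<exists>d\<in>D. adj R t d)}"
    and "x \<in> D" "simplicial (D \<union> T) R x"
  shows "simplicial A R x"
proof (rule simplicial_superset[OF assms(6)])
  have "D \<subseteq> W" unfolding assms(3) by (rule component_subset)
  then show "D \<union> T \<subseteq> A" using assms(2,4) by blast
  fix y assume "y \<in> A" "adj R x y"
  show "y \<in> D \<union> T"
  proof (cases "y \<in> W")
    case True
    with assms(3,5) \<open>adj R x y\<close> show ?thesis by (blast intro: component_adj_closed)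
  next
    case False
    with \<open>y \<in> A\<close> \<open>adj R x y\<close> assms(2,4,5) \<open>D \<subseteq> W\<close> adj_sym[OF assms(1)] show ?thesis by auto
  qed
qed

lemma chordal_simplicial_nonneighbour:
  assumes "finite \<Sigma>" "sym R" "chordal \<Sigma> R" "v \<in> \<Sigma>" "u \<in> \<Sigma>" "u \<noteq> v" "\<not> adj R v u"
  shows "\<exists>x. simplicial \<Sigma> R x \<and> x \<noteq> v \<and> \<not> adj R v x"
  using assms(1,3-7)
proof (induction \<Sigma> arbitrary: v u rule: finite_psubset_induct)
  case (psubset A)
  have chordal_sub: "chordal B R" if "B \<subset> A" for B
    using chordal_subset[OF psubset.prems(1)] that by blast
  have IH_simplicial: "\<exists>x. simplicial B R x" if "B \<subset> A" "B \<noteq> {}" for B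
    using that(2)
  proof (rule ex_simplicial_if_nonadjacent_pairs)
    fix v' u' assume "v' \<in> B" "u' \<in> B" "u' \<noteq> v'" "\<not> adj R v' u'"
    with psubset.IH[OF that(1) chordal_sub[OF that(1)]] show "\<exists>x. simplicial B R x" by blast
  qed
  \<comment> \<open>\<open>D\<close> is the component of \<open>u\<close> once the closed neighbourhood of \<open>v\<close> is deleted; the
    neighbours \<open>T\<close> of \<open>v\<close> attached to \<open>D\<close> form a clique, so a simplicial vertex of
    \<open>D \<union> T\<close> can be found inside \<open>D\<close>, and it stays simplicial in \<open>A\<close>.\<close>
  define W where "W = {x \<in> A. x \<noteq> v \<and> \<not> adj R v x}"
  define D where "D = component R W u"
  define T where "T = {t \<in> A. adj R v t \<and> (\<exists>d\<in>D. adj R t d)}"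
  have "u \<in> D" using psubset.prems by (simp add: D_def W_def self_in_component)
  have "D \<subseteq> W" unfolding D_def by (rule component_subset)
  then have "D \<subseteq> A" and D_far: "\<forall>x\<in>D. x \<noteq> v \<and> \<not> adj R v x" by (auto simp: W_def)
  have T_clique: "adj R t1 t2" if t: "t1 \<in> T" "t2 \<in> T" "t1 \<noteq> t2" for t1 t2
  proof -
    obtain d1 d2 where "d1 \<in> D" "d2 \<in> D" "adj R t1 d1" "adj R t2 d2"
      using t(1,2) unfolding T_def by blast
    moreover have "t1 \<in> A" "t2 \<in> A" "adj R v t1" "adj R v t2"
      using t(1,2) by (auto simp: T_def)
    ultimately show ?thesis
      using chordal_common_neighbours_adjacent[OF psubset.prems(1) assms(2) psubset.prems(2)
          \<open>D \<subseteq> A\<close> _ D_far] induced_connected_component[OF assms(2)] t(3)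
      unfolding D_def by blast
  qed
  have "D \<union> T \<subset> A"
    using \<open>D \<subseteq> A\<close> D_far psubset.prems(2) by (auto simp: T_def)
  have lift: "\<exists>x. simplicial A R x \<and> x \<noteq> v \<and> \<not> adj R v x"
    if "x \<in> D" "simplicial (D \<union> T) R x" for x
    using that simplicial_of_simplicial_in_far_component[OF assms(2) W_def D_def T_def] D_far
    by blast
  show ?case
  proof (cases "\<exists>w\<in>T. \<exists>h\<in>D \<union> T. h \<noteq> w \<and> \<not> adj R w h")
    case True
    then obtain w h where "w \<in> T" "h \<in> D \<union> T" "h \<noteq> w" "\<not> adj R w h" by blast
    then obtain x where x: "simplicial (D \<union> T) R x" "x \<noteq> w" "\<not> adj R w x"
      using psubset.IH[OF \<open>D \<union> T \<subset> A\<close> chordal_sub[OF \<open>D \<union> T \<subset> A\<close>]] by blast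
    with T_clique \<open>w \<in> T\<close> have "x \<in> D" by (auto simp: simplicial_def)
    with x lift show ?thesis by blast
  next
    case False
    obtain x where "simplicial D R x"
      using IH_simplicial \<open>u \<in> D\<close> \<open>D \<union> T \<subset> A\<close> by blast
    moreover have "simplicial (D \<union> T) R x"
      using simplicial_Un_universal[OF assms(2) \<open>simplicial D R x\<close>] False by blast
    ultimately show ?thesis
      using lift by (simp add: simplicial_def)
  qed
qed

lemma chordal_ex_simplicial:
  assumes "finite \<Sigma>" "sym R" "chordal \<Sigma> R" "\<Sigma> \<noteq> {}"
  shows "\<exists>x. simplicial \<Sigma> R x"
  using assms(4)
proof (rule ex_simplicial_if_nonadjacent_pairs)
  fix v u assume "v \<in> \<Sigma>" "u \<in> \<Sigma>" "u \<noteq> v" "\<not> adj R v u"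
  with chordal_simplicial_nonneighbour[OF assms(1-3)] show "\<exists>x. simplicial \<Sigma> R x" by blast
qed

section \<open>Perfect elimination orderings are admissible\<close>

definition admissible_enumeration :: "'a set \<Rightarrow> ('a \<times> 'a) set \<Rightarrow> 'a list \<Rightarrow> bool" where
  "admissible_enumeration \<Sigma> R as \<longleftrightarrow> distinct as \<and> set as = \<Sigma> \<and>
     (\<forall>k l. k < l \<and> l < length as \<longrightarrow>
        as ! k \<in> nbhd \<Sigma> R (as ! l) \<or>
        component R (set (take (Suc k) as)) (as ! k) \<inter> nbhd \<Sigma> R (as ! l) = {})"

lemma component_insert_simplicial:
  assumes "sym R" "simplicial A R s" "S \<subseteq> A" "s \<notin> S" "g \<in> S"
    and "y \<in> component R (insert s S) g"
  shows "y \<in> component R S g \<or> (y = s \<and> (\<exists>x \<in> component R S g. adj R s x))"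
proof -
  from assms(5,6) have "(g, y) \<in> (induced_edges R (insert s S))\<^sup>*"
    by (simp add: component_eq)
  then show ?thesis
  proof (induction rule: rtrancl_induct)
    case base
    with assms(5) show ?case by (simp add: self_in_component)
  next
    case (step y z)
    then have z: "z \<in> insert s S" "adj R y z" by (auto simp: induced_edges_def)
    from step.IH show ?case
    proof
      assume y: "y \<in> component R S g"
      show ?case
      proof (cases "z = s")
        case True
        with y z(2) adj_sym[OF assms(1)] show ?thesis by blast
      next
        case False
        with y z show ?thesis by (blast intro: component_adj_closed)
      qed
    next
      assume "y = s \<and> (\<exists>x \<in> component R S g. adj R s x)"
      then obtain x where y: "y = s" and x: "x \<in> component R S g" "adj R s x" by blast
      with z have "z \<in> S" by auto
      have "adj R x z" if "z \<noteq> x"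
        using assms(2) that x(2) z(2) y component_subset[of R S g] x(1) \<open>z \<in> S\<close> assms(3)
        unfolding simplicial_def by blast
      then have "z \<in> component R S g"
        using x(1) \<open>z \<in> S\<close> by (cases "z = x") (auto intro: component_adj_closed)
      then show ?case by blast
    qed
  qed
qed

lemma nbhd_Diff: "b \<in> nbhd A R a \<Longrightarrow> b \<noteq> s \<Longrightarrow> b \<in> nbhd (A - {s}) R a"
  by (simp add: nbhd_def)

lemma admissible_enumeration_Cons:
  assumes "sym R" "simplicial A R s" and bs: "admissible_enumeration (A - {s}) R bs"
  shows "admissible_enumeration A R (s # bs)"
  unfolding admissible_enumeration_def
proof (intro conjI allI impI)
  have "s \<in> A" using assms(2) by (simp add: simplicial_def)
  with bs show "distinct (s # bs)" "set (s # bs) = A"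
    by (auto simp: admissible_enumeration_def)
  fix k l assume kl: "k < l \<and> l < length (s # bs)"
  show "(s # bs) ! k \<in> nbhd A R ((s # bs) ! l) \<or>
    component R (set (take (Suc k) (s # bs))) ((s # bs) ! k) \<inter> nbhd A R ((s # bs) ! l) = {}"
  proof (cases k)
    case 0
    then have "component R (set (take (Suc k) (s # bs))) ((s # bs) ! k) \<subseteq> {(s # bs) ! k}"
      using component_subset[of R "{s}" s] by simp
    then show ?thesis by blast
  next
    case (Suc k')
    with kl obtain l' where l: "l = Suc l'" "k' < l'" "l' < length bs" by (cases l) auto
    define S where "S = set (take (Suc k') bs)"
    define g where "g = bs ! k'"
    define a where "a = bs ! l'"
    have "distinct bs" "set bs = A - {s}"
      using bs unfolding admissible_enumeration_def by blast+
    have "S \<subseteq> A - {s}"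
      using set_take_subset[of "Suc k'" bs] \<open>set bs = A - {s}\<close> unfolding S_def by blast
    have "g \<in> S"
      using l(2,3) by (simp add: S_def g_def take_Suc_conv_app_nth)
    have "a \<in> A - {s}"
      using l(3) \<open>set bs = A - {s}\<close> nth_mem unfolding a_def by blast
    have "a \<notin> S"
      using set_take_disj_set_drop_if_distinct[OF \<open>distinct bs\<close>, of "Suc k'" l'] l
      by (auto simp: S_def a_def Cons_nth_drop_Suc[symmetric])
    have bs_kl: "g \<in> nbhd (A - {s}) R a \<or> component R S g \<inter> nbhd (A - {s}) R a = {}"
      using bs l by (simp add: admissible_enumeration_def S_def g_def a_def)
    have "component R (insert s S) g \<inter> nbhd A R a = {}" if "g \<notin> nbhd A R a"
    proof (intro equals0I)
      fix y assume y: "y \<in> component R (insert s S) g \<inter> nbhd A R a"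
      have disjoint: "component R S g \<inter> nbhd (A - {s}) R a = {}"
        using bs_kl that by (auto simp: nbhd_def)
      from component_insert_simplicial[OF assms(1,2) _ _ \<open>g \<in> S\<close>] y \<open>S \<subseteq> A - {s}\<close>
      consider "y \<in> component R S g" | x where "y = s" "x \<in> component R S g" "adj R s x"
        by blast
      then show False
      proof cases
        case 1
        then have "y \<in> S" using component_subset[of R S g] by blast
        with 1 y disjoint \<open>S \<subseteq> A - {s}\<close> nbhd_Diff[of y A R a s] show ?thesis by blast
      next
        case 2
        then have "x \<in> S" "x \<noteq> a" using component_subset[of R S g] \<open>a \<notin> S\<close> by blast+
        moreover have "adj R s a"
          using y 2 \<open>a \<in> A - {s}\<close> assms(1) by (auto simp: nbhd_def adj_def dest: symD)
        ultimately have "adj R x a"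
          using assms(2) 2 \<open>S \<subseteq> A - {s}\<close> \<open>a \<in> A - {s}\<close> unfolding simplicial_def by blast
        then have "x \<in> nbhd (A - {s}) R a"
          using \<open>x \<in> S\<close> \<open>S \<subseteq> A - {s}\<close> assms(1) by (auto simp: nbhd_def adj_def dest: symD)
        with 2 disjoint show ?thesis by blast
      qed
    qed
    moreover have "set (take (Suc k) (s # bs)) = insert s S" "(s # bs) ! k = g" "(s # bs) ! l = a"
      using Suc l by (simp_all add: S_def g_def a_def)
    ultimately show ?thesis by metis
  qed
qed

lemma chordal_admissible_enumeration:
  assumes "finite \<Sigma>" "sym R" "chordal \<Sigma> R"
  shows "\<exists>as. admissible_enumeration \<Sigma> R as"
  using assms(1,3)
proof (induction \<Sigma> rule: finite_psubset_induct)
  case (psubset A)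
  show ?case
  proof (cases "A = {}")
    case True
    then show ?thesis by (auto simp: admissible_enumeration_def)
  next
    case False
    then obtain s where s: "simplicial A R s"
      using chordal_ex_simplicial[OF psubset.hyps(1) assms(2) psubset.prems] by blast
    then have "A - {s} \<subset> A" by (auto simp: simplicial_def)
    with psubset.IH chordal_subset[OF psubset.prems]
    obtain bs where "admissible_enumeration (A - {s}) R bs" by blast
    with admissible_enumeration_Cons[OF assms(2) s] show ?thesis by blast
  qed
qed

section \<open>Admissible enumerations exclude induced cycles\<close>

lemma admissible_enumeration_adj_if_connected:
  assumes "admissible_enumeration \<Sigma> R as" "k < l" "l < length as"
    and "induced_connected R Q" "Q \<subseteq> set (take (Suc k) as)" "as ! k \<in> Q"
    and "q \<in> Q" "q \<in> nbhd \<Sigma> R (as ! l)"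
  shows "as ! k \<in> nbhd \<Sigma> R (as ! l)"
proof -
  have "q \<in> component R (set (take (Suc k) as)) (as ! k)"
    using induced_connected_subset_component[OF assms(4-6)] assms(7) by blast
  with assms(8) have "component R (set (take (Suc k) as)) (as ! k) \<inter> nbhd \<Sigma> R (as ! l) \<noteq> {}"
    by blast
  with assms(1-3) show ?thesis unfolding admissible_enumeration_def by blast
qed

lemma nth_in_set_take: "i \<le> k \<Longrightarrow> i < length xs \<Longrightarrow> xs ! i \<in> set (take (Suc k) xs)"
  by (metis in_set_conv_nth length_take min_less_iff_conj nth_take le_imp_less_Suc)

lemma adj_in_nbhd: "adj R a b \<Longrightarrow> b \<in> \<Sigma> \<Longrightarrow> b \<in> nbhd \<Sigma> R a"
  by (simp add: adj_def nbhd_def)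

lemma admissible_enumeration_adj_across:
  assumes adm: "admissible_enumeration \<Sigma> R as" and "sym R"
    and pos: "\<And>q. q \<in> \<Sigma> \<Longrightarrow> pos q < length as \<and> as ! pos q = q"
    and A: "finite A" "A \<subseteq> \<Sigma>" "induced_connected R A"
    and m: "m \<in> \<Sigma>" "m \<notin> A" "\<forall>q\<in>A. pos q \<le> pos m"
    and x: "x \<in> A" "adj R m x" "\<forall>q\<in>A. adj R m q \<longrightarrow> q = x"
    and y: "y \<in> \<Sigma>" "pos x < pos y" "z \<in> A" "adj R y z"
  shows "adj R x y"
proof -
  have prefix: "A \<subseteq> set (take (Suc k) as)" if "\<forall>q\<in>A. pos q \<le> k" for k
  proof
    fix q assume "q \<in> A"
    with A(2) that have "pos q \<le> k" "pos q < length as" "as ! pos q = q"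
      using pos by auto
    then show "q \<in> set (take (Suc k) as)" using nth_in_set_take by metis
  qed
  have "Max (pos ` A) \<in> pos ` A" using A(1) x(1) by (intro Max_in) auto
  then obtain g where "g \<in> A" "pos g = Max (pos ` A)" by auto
  then have g_max: "\<forall>q\<in>A. pos q \<le> pos g" using A(1) by simp
  have "g \<in> \<Sigma>" using \<open>g \<in> A\<close> A(2) by blast
  have "pos g \<noteq> pos m"
    using pos[OF \<open>g \<in> \<Sigma>\<close>] pos[OF m(1)] m(2) \<open>g \<in> A\<close> by metis
  with m(3) \<open>g \<in> A\<close> have "pos g < pos m" by fastforce
  have "x \<in> nbhd \<Sigma> R (as ! pos m)"
    using pos[OF m(1)] x(1,2) A(2) by (auto intro: adj_in_nbhd)
  then have "as ! pos g \<in> nbhd \<Sigma> R (as ! pos m)"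
    using \<open>pos g < pos m\<close> pos[OF m(1)] A(3) prefix[OF g_max] pos[OF \<open>g \<in> \<Sigma>\<close>] \<open>g \<in> A\<close> x(1)
    by (intro admissible_enumeration_adj_if_connected[OF adm, where Q = A and q = x]) auto
  then have "adj R m g"
    using pos[OF m(1)] pos[OF \<open>g \<in> \<Sigma>\<close>] m(2) \<open>g \<in> A\<close> by (auto simp: nbhd_def adj_def)
  with x(3) \<open>g \<in> A\<close> have "g = x" by blast
  have "x \<in> \<Sigma>" using x(1) A(2) by blast
  have "z \<in> nbhd \<Sigma> R (as ! pos y)"
    using pos[OF y(1)] y(3,4) A(2) by (auto intro: adj_in_nbhd)
  then have "as ! pos x \<in> nbhd \<Sigma> R (as ! pos y)"
    using y(2,3) pos[OF y(1)] A(3) prefix g_max[unfolded \<open>g = x\<close>] pos[OF \<open>x \<in> \<Sigma>\<close>] x(1)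
    by (intro admissible_enumeration_adj_if_connected[OF adm, where Q = A and q = z]) auto
  then have "adj R y x"
    using pos[OF y(1)] pos[OF \<open>x \<in> \<Sigma>\<close>] y(2) by (auto simp: nbhd_def adj_def)
  with \<open>sym R\<close> show ?thesis by (simp add: adj_sym)
qed

lemma int_dvd_eq_0_if_abs_less: "(L::int) dvd d \<Longrightarrow> \<bar>d\<bar> < L \<Longrightarrow> d = 0"
proof (rule ccontr)
  assume "L dvd d" "\<bar>d\<bar> < L" "d \<noteq> 0"
  with dvd_imp_le_int[of d L] show False by linarith
qed

lemma nat_mod_int_less: "0 < n \<Longrightarrow> nat (t mod int n) < n"
  by (simp add: nat_less_iff)

lemma nat_mod_succ_eq_iff_dvd:
  fixes a b :: int and n :: nat
  assumes "0 < n"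
  shows "nat (b mod int n) = (nat (a mod int n) + 1) mod n \<longleftrightarrow> int n dvd b - a - 1"
proof -
  have "nat (b mod int n) = (nat (a mod int n) + 1) mod n \<longleftrightarrow>
      b mod int n = (a mod int n + 1) mod int n"
    using assms by (simp add: nat_eq_iff zmod_int add.commute)
  also have "\<dots> \<longleftrightarrow> b mod int n = (a + 1) mod int n"
    by (simp add: mod_add_left_eq)
  also have "\<dots> \<longleftrightarrow> int n dvd b - a - 1"
    by (simp add: mod_eq_dvd_iff diff_diff_add)
  finally show ?thesis .
qed

text \<open>Integer indices make
  the reversed traversal \<open>t \<mapsto> c (- t)\<close> a parametrisation of the same kind.\<close>

locale cycle_parametrisation =
  fixes R :: "('a \<times> 'a) set" and L :: int and c :: "int \<Rightarrow> 'a"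
  assumes length_ge_4: "4 \<le> L"
    and eq_iff: "c a = c b \<longleftrightarrow> L dvd a - b"
    and adj_iff: "adj R (c a) (c b) \<longleftrightarrow> L dvd a - b - 1 \<or> L dvd b - a - 1"
begin

lemma reflect: "cycle_parametrisation R L (\<lambda>t. c (- t))"
proof
  show "c (- a) = c (- b) \<longleftrightarrow> L dvd a - b" for a b
    using eq_iff[of "- a" "- b"] dvd_minus_iff[of L "a - b"] by simp
  show "adj R (c (- a)) (c (- b)) \<longleftrightarrow> L dvd a - b - 1 \<or> L dvd b - a - 1" for a b
    using adj_iff[of "- a" "- b"] by (simp add: algebra_simps disj_commute)
qed (rule length_ge_4)

lemma eq_iff_close: "\<bar>a - b\<bar> < L \<Longrightarrow> c a = c b \<longleftrightarrow> a = b"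
  using eq_iff int_dvd_eq_0_if_abs_less by fastforce

lemma adj_iff_close: "\<bar>a - b\<bar> \<le> L - 2 \<Longrightarrow> adj R (c a) (c b) \<longleftrightarrow> \<bar>a - b\<bar> = 1"
proof -
  assume close: "\<bar>a - b\<bar> \<le> L - 2"
  have "L dvd a - b - 1 \<longleftrightarrow> a - b - 1 = 0" "L dvd b - a - 1 \<longleftrightarrow> b - a - 1 = 0"
    using close int_dvd_eq_0_if_abs_less[of L "a - b - 1"] int_dvd_eq_0_if_abs_less[of L "b - a - 1"]
    by auto
  then show ?thesis using adj_iff by auto
qed

lemma induced_connected_arc: "induced_connected R (c ` {lo..hi})"
proof -
  let ?E = "induced_edges R (c ` {lo..hi})"
  have reach: "(c s, c t) \<in> ?E\<^sup>* \<and> (c t, c s) \<in> ?E\<^sup>*" if "lo \<le> s" "s \<le> t" "t \<le> hi" for s t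
    using that(2,3)
  proof (induction t rule: int_ge_induct)
    case (step t)
    have "adj R (c t) (c (t + 1))" "adj R (c (t + 1)) (c t)"
      by (simp_all add: adj_iff)
    with step that(1) have "(c t, c (t + 1)) \<in> ?E" "(c (t + 1), c t) \<in> ?E"
      by (auto simp: induced_edges_def)
    moreover from step have "(c s, c t) \<in> ?E\<^sup>*" "(c t, c s) \<in> ?E\<^sup>*" by simp_all
    ultimately show ?case by (meson rtrancl_into_rtrancl converse_rtrancl_into_rtrancl)
  qed simp
  show ?thesis
    unfolding induced_connected_def
  proof (intro ballI)
    fix a b assume "a \<in> c ` {lo..hi}" "b \<in> c ` {lo..hi}"
    then obtain s t where "a = c s" "b = c t" "s \<in> {lo..hi}" "t \<in> {lo..hi}" by blast
    then show "(a, b) \<in> ?E\<^sup>*"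
      using reach[of s t] reach[of t s] by (cases "s \<le> t") auto
  qed
qed

end

lemma induced_cycle_parametrisation:
  assumes "induced_cycle \<Sigma> R vs"
  shows "cycle_parametrisation R (int (length vs)) (\<lambda>t. vs ! nat (t mod int (length vs)))"
proof
  let ?n = "length vs"
  have "4 \<le> ?n" "distinct vs" and cyc_adj: "\<And>i j. i < ?n \<Longrightarrow> j < ?n \<Longrightarrow>
      adj R (vs ! i) (vs ! j) \<longleftrightarrow> j = (i + 1) mod ?n \<or> i = (j + 1) mod ?n"
    using assms by (auto simp: induced_cycle_def)
  then have "0 < ?n" "0 < int ?n" by linarith+
  have idx: "nat (t mod int ?n) < ?n" for t
    using nat_mod_int_less[OF \<open>0 < ?n\<close>] .
  show "4 \<le> int ?n" using \<open>4 \<le> ?n\<close> by simp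
  fix a b :: int
  have "vs ! nat (a mod int ?n) = vs ! nat (b mod int ?n) \<longleftrightarrow> a mod int ?n = b mod int ?n"
    using nth_eq_iff_index_eq[OF \<open>distinct vs\<close> idx idx] \<open>0 < int ?n\<close> by (simp add: eq_nat_nat_iff)
  then show "vs ! nat (a mod int ?n) = vs ! nat (b mod int ?n) \<longleftrightarrow> int ?n dvd a - b"
    by (simp add: mod_eq_dvd_iff)
  show "adj R (vs ! nat (a mod int ?n)) (vs ! nat (b mod int ?n)) \<longleftrightarrow>
      int ?n dvd a - b - 1 \<or> int ?n dvd b - a - 1"
    using cyc_adj[OF idx idx] nat_mod_succ_eq_iff_dvd[OF \<open>0 < ?n\<close>] by (simp add: disj_commute)
qed

lemma (in cycle_parametrisation) admissible_enumeration_pos_pred_le_succ: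
  assumes adm: "admissible_enumeration \<Sigma> R as" and "sym R"
    and pos: "\<And>q. q \<in> \<Sigma> \<Longrightarrow> pos q < length as \<and> as ! pos q = q"
    and "range c \<subseteq> \<Sigma>" and latest: "\<forall>t. pos (c t) \<le> pos (c i)"
  shows "pos (c (i - 1)) \<le> pos (c (i + 1))"
proof (rule ccontr)
  assume not_le: "\<not> ?thesis"
  \<comment> \<open>the cycle with \<open>c i\<close> and \<open>c (i - 1) = c (i + L - 1)\<close> removed\<close>
  define A where "A = c ` {i + 1..i + L - 2}"
  have "c i \<notin> A" "c (i - 1) \<notin> A"
    using eq_iff_close length_ge_4 by (auto simp: A_def)
  moreover have "c (i + 1) \<in> A" "c (i + L - 2) \<in> A"
    using length_ge_4 by (auto simp: A_def)
  moreover have "adj R (c (i - 1)) (c (i + L - 2))"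
    by (simp add: adj_iff)
  moreover have "adj R (c i) (c (i + 1))" "\<not> adj R (c (i + 1)) (c (i - 1))"
    using length_ge_4 by (simp_all add: adj_iff_close)
  moreover have "t = i + 1" if "t \<in> {i + 1..i + L - 2}" "adj R (c i) (c t)" for t
    using that length_ge_4 by (simp add: adj_iff_close)
  then have "\<forall>q\<in>A. adj R (c i) q \<longrightarrow> q = c (i + 1)"
    unfolding A_def by fastforce
  moreover have "finite A" "A \<subseteq> \<Sigma>" "induced_connected R A"
    using \<open>range c \<subseteq> \<Sigma>\<close> induced_connected_arc by (auto simp: A_def)
  moreover have "\<forall>q\<in>A. pos q \<le> pos (c i)"
    using latest by (auto simp: A_def)
  moreover have "c i \<in> \<Sigma>" "c (i - 1) \<in> \<Sigma>"
    using \<open>range c \<subseteq> \<Sigma>\<close> by auto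
  moreover have "pos (c (i + 1)) < pos (c (i - 1))"
    using not_le by simp
  ultimately have "adj R (c (i + 1)) (c (i - 1))"
    using admissible_enumeration_adj_across[OF adm \<open>sym R\<close> pos] by blast
  with \<open>\<not> adj R (c (i + 1)) (c (i - 1))\<close> show False ..
qed

lemma admissible_enumeration_chordal:
  assumes adm: "admissible_enumeration \<Sigma> R as" and "sym R"
  shows "chordal \<Sigma> R"
  unfolding chordal_def
proof
  assume "\<exists>vs. induced_cycle \<Sigma> R vs"
  then obtain vs where cyc: "induced_cycle \<Sigma> R vs" by blast
  define L where "L = int (length vs)"
  define c where "c t = vs ! nat (t mod L)" for t
  interpret cycle_parametrisation R L c
    unfolding L_def c_def by (rule induced_cycle_parametrisation[OF cyc])
  interpret reflected: cycle_parametrisation R L "\<lambda>t. c (- t)"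
    by (rule reflect)
  have "\<forall>q\<in>\<Sigma>. \<exists>k. k < length as \<and> as ! k = q"
    using adm by (auto simp: admissible_enumeration_def in_set_conv_nth)
  then obtain pos where pos: "\<And>q. q \<in> \<Sigma> \<Longrightarrow> pos q < length as \<and> as ! pos q = q"
    using bchoice[of \<Sigma> "\<lambda>q k. k < length as \<and> as ! k = q"] by blast
  have "range c \<subseteq> set vs"
  proof
    fix q assume "q \<in> range c"
    then obtain t where "q = c t" by blast
    moreover have "0 < length vs" using length_ge_4 unfolding L_def by linarith
    then have "nat (t mod L) < length vs" unfolding L_def by (rule nat_mod_int_less)
    ultimately show "q \<in> set vs" by (simp add: c_def)
  qed
  moreover have "set vs \<subseteq> \<Sigma>" using cyc by (simp add: induced_cycle_def)
  ultimately have range: "range c \<subseteq> \<Sigma>" by blast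
  have "finite (pos ` range c)"
    using \<open>range c \<subseteq> set vs\<close> finite_subset by blast
  then have "Max (pos ` range c) \<in> pos ` range c" by (intro Max_in) auto
  then obtain i where "pos (c i) = Max (pos ` range c)" by auto
  with \<open>finite (pos ` range c)\<close> have latest: "\<forall>t. pos (c t) \<le> pos (c i)" by simp
  have "pos (c (i - 1)) \<le> pos (c (i + 1))"
    by (rule admissible_enumeration_pos_pred_le_succ[OF adm \<open>sym R\<close> pos range latest])
  moreover have "pos (c (i + 1)) \<le> pos (c (i - 1))"
    using reflected.admissible_enumeration_pos_pred_le_succ[OF adm \<open>sym R\<close> pos, of "- i"] range latest
    by (auto simp: algebra_simps)
  ultimately have "c (i + 1) = c (i - 1)"
    using pos range by (metis antisym rangeI subsetD)
  with eq_iff_close[of "i + 1" "i - 1"] length_ge_4 show False by simp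
qed

theorem proposition3p1:
  fixes \<Sigma> :: "'a set" and R :: "('a \<times> 'a) set"
  assumes "finite \<Sigma>"
    and "R \<subseteq> \<Sigma> \<times> \<Sigma>"
    and "refl_on \<Sigma> R"
    and "sym R"
  shows "chordal \<Sigma> R \<longleftrightarrow>
    (\<exists>as. distinct as \<and> set as = \<Sigma> \<and>
       (\<forall>k l. k < l \<and> l < length as \<longrightarrow>
          as ! k \<in> nbhd \<Sigma> R (as ! l) \<or>
          component R (set (take (Suc k) as)) (as ! k) \<inter> nbhd \<Sigma> R (as ! l) = {}))"
  unfolding admissible_enumeration_def[symmetric]
  using chordal_admissible_enumeration[OF assms(1,4)] admissible_enumeration_chordal[OF _ assms(4)]
  by blast

end
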